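(* Let $(B,\lfloor\cdot,\cdot\rfloor)$ be an SSD space with quadratic form $q$, and let $A\subset B$ be a $q$-positive set. If $A$ is contained in more than one maximally $q$-positive set, then the family of maximally $q$-positive sets containing $A$ has at least the cardinality of the continuum.
   Context: An SSD space is a pair $(B,\lfloor\cdot,\cdot\rfloor)$ with $B$ a nonzero real vector space and $\lfloor\cdot,\cdot\rfloor$ a symmetric bilinear form on $B$; $q(b)=\frac12\lfloor b,b\rfloor$. A nonempty $A\subset B$ is $q$-positive if $q(b-c)\ge0$ for all $b,c\in A$; it is maximally $q$-positive if it is $q$-positive and not properly contained in another $q$-positive set. *)

theory Defs
  imports "HOL-Analysis.Analysis"
begin

definition SSD_space :: "('a::real_vector \<Rightarrow> 'a \<Rightarrow> real) \<Rightarrow> bool" where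
  "SSD_space s \<longleftrightarrow> (\<exists>b::'a. b \<noteq> 0) \<and> bilinear s \<and> (\<forall>b c. s b c = s c b)"

definition qform :: "('a \<Rightarrow> 'a \<Rightarrow> real) \<Rightarrow> 'a \<Rightarrow> real" where
  "qform s b = s b b / 2"

definition q_positive :: "('a::real_vector \<Rightarrow> 'a \<Rightarrow> real) \<Rightarrow> 'a set \<Rightarrow> bool" where
  "q_positive s A \<longleftrightarrow> A \<noteq> {} \<and> (\<forall>b\<in>A. \<forall>c\<in>A. qform s (b - c) \<ge> 0)"

definition max_q_positive :: "('a::real_vector \<Rightarrow> 'a \<Rightarrow> real) \<Rightarrow> 'a set \<Rightarrow> bool" where
  "max_q_positive s A \<longleftrightarrow> q_positive s A \<and> (\<forall>A'. q_positive s A' \<and> A \<subseteq> A' \<longrightarrow> A' = A)"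

end

theory Submission
  imports Defs
begin

text \<open>Pick \<open>b \<in> M\<^sub>1\<close>, \<open>c \<in> M\<^sub>2\<close> with \<open>q(b - c) < 0\<close>; they exist since \<open>M\<^sub>1 \<union> M\<^sub>2\<close> is not
  \<open>q\<close>-positive. For \<open>a \<in> A\<close> put \<open>u = b - a\<close>, \<open>v = c - a\<close>: from \<open>q(u), q(v) \<ge> 0 > q(u - v)\<close>
  the cross term \<open>\<lfloor>u,v\<rfloor>\<close> is positive, so every point \<open>p\<^sub>t = (1-t)b + tc\<close>, \<open>t \<in> [0,1]\<close>, is
  \<open>q\<close>-positive with respect to \<open>A\<close>. Extend \<open>A \<union> {p\<^sub>t}\<close> to a maximally \<open>q\<close>-positive set by
  Zorn's lemma. Since \<open>q(p\<^sub>t - p\<^sub>r) = (t - r)\<^sup>2 q(b - c) < 0\<close> for \<open>t \<noteq> r\<close>, no two of these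
  sets coincide.\<close>

lemma q_positive_extends_to_max:
  assumes "q_positive s Y"
  obtains M where "max_q_positive s M" "Y \<subseteq> M"
proof -
  let ?F = "{X. q_positive s X \<and> Y \<subseteq> X}"
  have "\<exists>M\<in>?F. \<forall>X\<in>?F. M \<subseteq> X \<longrightarrow> X = M"
  proof (rule subset_Zorn_nonempty)
    show "?F \<noteq> {}" using assms by blast
  next
    fix C assume "C \<noteq> {}" and "subset.chain ?F C"
    then obtain X0 where "X0 \<in> C" and sub: "C \<subseteq> ?F"
      and total: "\<forall>X\<in>C. \<forall>Z\<in>C. X \<subseteq> Z \<or> Z \<subseteq> X"
      by (auto simp: subset_chain_def)
    have "qform s (b - c) \<ge> 0" if "b \<in> \<Union>C" "c \<in> \<Union>C" for b c
    proof -
      obtain W where "W \<in> C" "b \<in> W" "c \<in> W" using \<open>b \<in> \<Union>C\<close> \<open>c \<in> \<Union>C\<close> total by blast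
      then show ?thesis using sub by (auto simp: q_positive_def)
    qed
    moreover have "Y \<subseteq> \<Union>C" "\<Union>C \<noteq> {}"
      using \<open>X0 \<in> C\<close> sub unfolding q_positive_def by blast+
    ultimately show "\<Union>C \<in> ?F" by (simp add: q_positive_def)
  qed
  then obtain M where M: "q_positive s M" "Y \<subseteq> M" and maximal: "\<forall>X\<in>?F. M \<subseteq> X \<longrightarrow> X = M"
    by blast
  have "max_q_positive s M"
    unfolding max_q_positive_def
  proof (intro conjI allI impI)
    fix X assume "q_positive s X \<and> M \<subseteq> X"
    with M(2) maximal show "X = M" by blast
  qed (fact M(1))
  then show thesis using M(2) by (rule that)
qed

lemma max_q_positive_imp_q_positive: "max_q_positive s M \<Longrightarrow> q_positive s M"
  by (simp add: max_q_positive_def)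

lemma q_positive_qform_nonneg: "q_positive s M \<Longrightarrow> b \<in> M \<Longrightarrow> c \<in> M \<Longrightarrow> qform s (b - c) \<ge> 0"
  by (simp add: q_positive_def)

lemma qform_scaleR:
  assumes "bilinear s"
  shows "qform s (r *\<^sub>R x) = r\<^sup>2 * qform s x"
  by (simp add: qform_def bilinear_lmul[OF assms] bilinear_rmul[OF assms] power2_eq_square)

lemma qform_diff_commute:
  assumes "bilinear s"
  shows "qform s (x - y) = qform s (y - x)"
  using qform_scaleR[OF assms, of "-1" "x - y"] by simp

lemma qform_diff:
  assumes "bilinear s" and "\<forall>x y. s x y = s y x"
  shows "qform s (u - v) = qform s u - s u v + qform s v"
  using assms(2)[rule_format, of v u]
  by (simp add: qform_def bilinear_lsub[OF assms(1)] bilinear_rsub[OF assms(1)] field_simps)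

lemma qform_linear_combination:
  assumes "bilinear s" and "\<forall>x y. s x y = s y x"
  shows "qform s (\<alpha> *\<^sub>R u + \<beta> *\<^sub>R v) = \<alpha>\<^sup>2 * qform s u + \<alpha> * \<beta> * s u v + \<beta>\<^sup>2 * qform s v"
proof -
  have "s (\<alpha> *\<^sub>R u + \<beta> *\<^sub>R v) (\<alpha> *\<^sub>R u + \<beta> *\<^sub>R v) = \<alpha>\<^sup>2 * s u u + 2 * \<alpha> * \<beta> * s u v + \<beta>\<^sup>2 * s v v"
    using assms(2)[rule_format, of v u]
    by (simp add: bilinear_ladd[OF assms(1)] bilinear_radd[OF assms(1)]
        bilinear_lmul[OF assms(1)] bilinear_rmul[OF assms(1)] power2_eq_square algebra_simps)
  then show ?thesis by (simp add: qform_def)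
qed

lemma q_positive_insert:
  assumes "bilinear s" and "q_positive s A" and "\<forall>a\<in>A. qform s (x - a) \<ge> 0"
  shows "q_positive s (insert x A)"
  using assms qform_diff_commute[OF assms(1), of _ x]
  by (auto simp: q_positive_def qform_def bilinear_lzero[OF assms(1)])

lemma max_q_positive_distinct_negative_pair:
  assumes "bilinear s" and "max_q_positive s M1" "max_q_positive s M2" "M1 \<noteq> M2"
  obtains b c where "b \<in> M1" "c \<in> M2" "qform s (b - c) < 0"
proof -
  have "\<not> q_positive s (M1 \<union> M2)"
  proof
    assume "q_positive s (M1 \<union> M2)"
    then have "M1 \<union> M2 = M1" "M1 \<union> M2 = M2"
      using assms(2,3) unfolding max_q_positive_def by blast+
    with assms(4) show False by simp
  qed
  moreover have "M1 \<union> M2 \<noteq> {}" using assms(2) by (auto simp: max_q_positive_def q_positive_def)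
  ultimately obtain x y where xy: "x \<in> M1 \<union> M2" "y \<in> M1 \<union> M2" "qform s (x - y) < 0"
    unfolding q_positive_def by (auto simp: not_le)
  note nonneg1 = q_positive_qform_nonneg[OF max_q_positive_imp_q_positive[OF assms(2)]]
    and nonneg2 = q_positive_qform_nonneg[OF max_q_positive_imp_q_positive[OF assms(3)]]
  show thesis
  proof (cases "x \<in> M1")
    case True
    then have "y \<notin> M1" using nonneg1[of x y] xy(3) by linarith
    with xy(2) have "y \<in> M2" by blast
    with True xy(3) show thesis using that by blast
  next
    case False
    with xy(1) have "x \<in> M2" by blast
    then have "y \<notin> M2" using nonneg2[of x y] xy(3) by linarith
    with xy(2) have "y \<in> M1" by blast
    moreover have "qform s (y - x) < 0" using xy(3) qform_diff_commute[OF assms(1), of x y] by simp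
    ultimately show thesis using \<open>x \<in> M2\<close> that by blast
  qed
qed

lemma q_positive_insert_segment_point:
  assumes "bilinear s" and sym: "\<forall>x y. s x y = s y x" and "q_positive s A"
    and b: "\<forall>a\<in>A. qform s (b - a) \<ge> 0" and c: "\<forall>a\<in>A. qform s (c - a) \<ge> 0"
    and "qform s (b - c) \<le> 0" and "t \<in> {0..1}"
  shows "q_positive s (insert ((1 - t) *\<^sub>R b + t *\<^sub>R c) A)"
proof (rule q_positive_insert[OF assms(1,3)], intro ballI)
  fix a assume "a \<in> A"
  let ?u = "b - a" and ?v = "c - a"
  have "qform s (?u - ?v) \<le> 0" using \<open>qform s (b - c) \<le> 0\<close> by simp
  then have cross: "s ?u ?v \<ge> 0"
    using qform_diff[OF assms(1) sym, of ?u ?v] b c \<open>a \<in> A\<close> by fastforce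
  have "(1 - t) *\<^sub>R b + t *\<^sub>R c - a = (1 - t) *\<^sub>R ?u + t *\<^sub>R ?v"
    by (simp add: algebra_simps)
  then have "qform s ((1 - t) *\<^sub>R b + t *\<^sub>R c - a)
      = (1 - t)\<^sup>2 * qform s ?u + (1 - t) * t * s ?u ?v + t\<^sup>2 * qform s ?v"
    using qform_linear_combination[OF assms(1) sym] by simp
  also have "\<dots> \<ge> 0"
    using cross b c \<open>a \<in> A\<close> \<open>t \<in> {0..1}\<close> by (intro add_nonneg_nonneg mult_nonneg_nonneg) auto
  finally show "qform s ((1 - t) *\<^sub>R b + t *\<^sub>R c - a) \<ge> 0" .
qed

lemma qform_segment_points:
  assumes "bilinear s"
  shows "qform s (((1 - t) *\<^sub>R b + t *\<^sub>R c) - ((1 - r) *\<^sub>R b + r *\<^sub>R c)) = (t - r)\<^sup>2 * qform s (b - c)"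
proof -
  have "((1 - t) *\<^sub>R b + t *\<^sub>R c) - ((1 - r) *\<^sub>R b + r *\<^sub>R c) = (r - t) *\<^sub>R (b - c)"
    by (simp add: algebra_simps)
  then show ?thesis by (simp add: qform_scaleR[OF assms] power2_commute)
qed

lemma max_q_positive_family_on_segment:
  assumes "bilinear s" and "\<forall>x y. s x y = s y x" and "q_positive s A"
    and "\<forall>a\<in>A. qform s (b - a) \<ge> 0" and "\<forall>a\<in>A. qform s (c - a) \<ge> 0"
    and "qform s (b - c) < 0"
  obtains F where "inj_on F {0..1::real}" "F ` {0..1} \<subseteq> {M. max_q_positive s M \<and> A \<subseteq> M}"
proof -
  define p where "p t = (1 - t) *\<^sub>R b + t *\<^sub>R c" for t :: real
  have "\<exists>M. max_q_positive s M \<and> insert (p t) A \<subseteq> M" if "t \<in> {0..1}" for t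
    using q_positive_insert_segment_point[OF assms(1-5) _ that] assms(6)
    by (auto simp: p_def elim!: q_positive_extends_to_max)
  then obtain F where F: "\<And>t. t \<in> {0..1} \<Longrightarrow> max_q_positive s (F t) \<and> insert (p t) A \<subseteq> F t"
    by metis
  have "inj_on F {0..1}"
  proof (rule inj_onI, rule ccontr)
    fix t r assume "t \<in> {0..1}" "r \<in> {0..1}" "F t = F r" "t \<noteq> r"
    then have "p t \<in> F t" "p r \<in> F t" "q_positive s (F t)"
      using F by (auto simp: max_q_positive_def)
    then have "qform s (p t - p r) \<ge> 0" by (simp add: q_positive_qform_nonneg)
    moreover have "qform s (p t - p r) < 0"
      using qform_segment_points[OF assms(1)] assms(6) \<open>t \<noteq> r\<close>
      by (simp add: p_def mult_pos_neg)
    ultimately show False by simp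
  qed
  moreover have "F ` {0..1} \<subseteq> {M. max_q_positive s M \<and> A \<subseteq> M}" using F by blast
  ultimately show thesis by (rule that)
qed

lemma inj_arctan_into_unit_interval:
  "inj (\<lambda>t. 1/2 + arctan t / pi) \<and> range (\<lambda>t. 1/2 + arctan t / pi) \<subseteq> {0..1}"
proof
  show "inj (\<lambda>t. 1/2 + arctan t / pi)" by (rule injI) (simp add: arctan_eq_iff)
  have "0 \<le> 1/2 + arctan t / pi" "1/2 + arctan t / pi \<le> 1" for t
    using arctan_lbound[of t] arctan_ubound[of t] by (simp_all add: field_simps)
  then show "range (\<lambda>t. 1/2 + arctan t / pi) \<subseteq> {0..1}" by auto
qed

theorem mainTheorem2:
  fixes s :: "'a::real_vector \<Rightarrow> 'a \<Rightarrow> real" and A :: "'a set"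
  assumes "SSD_space s"
    and "q_positive s A"
    and "\<exists>M1 M2. M1 \<noteq> M2 \<and> max_q_positive s M1 \<and> A \<subseteq> M1 \<and> max_q_positive s M2 \<and> A \<subseteq> M2"
  shows "\<exists>f :: real \<Rightarrow> 'a set. inj f \<and> range f \<subseteq> {M. max_q_positive s M \<and> A \<subseteq> M}"
proof -
  have bl: "bilinear s" and sym: "\<forall>x y. s x y = s y x"
    using assms(1) by (auto simp: SSD_space_def)
  obtain M1 M2 where M: "M1 \<noteq> M2" "max_q_positive s M1" "A \<subseteq> M1" "max_q_positive s M2" "A \<subseteq> M2"
    using assms(3) by blast
  obtain b c where "b \<in> M1" "c \<in> M2" and neg: "qform s (b - c) < 0"
    using max_q_positive_distinct_negative_pair[OF bl M(2,4,1)] .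
  have above_A: "\<forall>a\<in>A. qform s (x - a) \<ge> 0" if "max_q_positive s M" "A \<subseteq> M" "x \<in> M" for M x
    using q_positive_qform_nonneg[OF max_q_positive_imp_q_positive[OF that(1)] that(3)] that(2) by blast
  obtain F where F: "inj_on F {0..1::real}" "F ` {0..1} \<subseteq> {M. max_q_positive s M \<and> A \<subseteq> M}"
    using max_q_positive_family_on_segment[OF bl sym assms(2)
        above_A[OF M(2,3) \<open>b \<in> M1\<close>] above_A[OF M(4,5) \<open>c \<in> M2\<close>] neg] .
  let ?g = "\<lambda>t::real. 1/2 + arctan t / pi"
  have g: "inj ?g" "range ?g \<subseteq> {0..1}" using inj_arctan_into_unit_interval by blast+
  have "inj (F \<circ> ?g)" by (rule comp_inj_on[OF g(1) inj_on_subset[OF F(1) g(2)]])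
  moreover have "range (F \<circ> ?g) \<subseteq> {M. max_q_positive s M \<and> A \<subseteq> M}"
    using image_mono[OF g(2), of F] F(2) by (simp add: image_comp)
  ultimately show ?thesis by blast
qed

end
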